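(* Let $m \ge 2$, $n \ge 2$, and for $1 \le i \le m$ let $f_i(x) = x^T A_i x + c_i^T x + d_i$ be quadratics on $\mathbb{R}^n$ with $A_i$ symmetric, where $f_1(x) = \|x\|^2 - 1$. For $2 \le i \le m$ let $U_i > 0$ satisfy $|f_i(x)| \le U_i$ for all $x$ with $\|x\|^2 \le 2$. Let (S1) be the system $f_i(x) \le 0$, $1 \le i \le m$, and let (S2) be the system in the real variables $v_0, x_1,\ldots,x_n, s_1,\ldots,s_m, w_2,\ldots,w_m$: $$x^T A_i x + c_i^T v_0 x + d_i v_0^2 + s_i^2 = 0, \quad 1 \le i \le m,$$ $$\frac{s_i^2 + w_i^2}{U_i} - v_0^2 = 0, \quad 2 \le i \le m,$$ $$\|x\|^2 + s_1^2 + \sum_{i=2}^m \frac{s_i^2 + w_i^2}{U_i} + v_0^2 = m+1.$$ Let $M$ denote the largest absolute value of a coefficient in (S2), and let $0 \le \epsilon < 1/2$. (a) If (S1) is $\epsilon$-feasible, then (S2) is $m\epsilon$-feasible. (b) Conversely, if (S2) is $\epsilon$-feasible, then (S1) is $(2n+1)M\epsilon$-feasible.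
   Context: For a system of inequalities $f_i(x)\le 0$, a vector $\hat x$ is $\epsilon$-feasible if $f_i(\hat x) \le \epsilon$ for all $i$, and the system is $\epsilon$-feasible if such a vector exists. For equations $h = 0$, $\epsilon$-feasibility means $|h| \le \epsilon$. *)

theory Defs
  imports "HOL-Analysis.Analysis"
begin

definition quad :: "real^'n^'n \<Rightarrow> real^'n \<Rightarrow> real \<Rightarrow> real^'n \<Rightarrow> real" where
  "quad A c d x = x \<bullet> (A *v x) + c \<bullet> x + d"

definition S1_eps_feasible ::
  "nat \<Rightarrow> (nat \<Rightarrow> real^'n^'n) \<Rightarrow> (nat \<Rightarrow> real^'n) \<Rightarrow> (nat \<Rightarrow> real) \<Rightarrow> real \<Rightarrow> bool" where
  "S1_eps_feasible m A c d eps \<longleftrightarrow>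
     (\<exists>x. \<forall>i\<in>{1..m}. quad (A i) (c i) (d i) x \<le> eps)"

definition S2_eqA :: "real^'n^'n \<Rightarrow> real^'n \<Rightarrow> real \<Rightarrow> real \<Rightarrow> real^'n \<Rightarrow> real \<Rightarrow> real" where
  "S2_eqA Ai ci di v0 x si = x \<bullet> (Ai *v x) + v0 * (ci \<bullet> x) + di * v0\<^sup>2 + si\<^sup>2"

definition S2_eqB :: "real \<Rightarrow> real \<Rightarrow> real \<Rightarrow> real \<Rightarrow> real" where
  "S2_eqB Ui v0 si wi = (si\<^sup>2 + wi\<^sup>2) / Ui - v0\<^sup>2"

definition S2_eqC :: "nat \<Rightarrow> (nat \<Rightarrow> real) \<Rightarrow> real \<Rightarrow> real^'n \<Rightarrow> (nat \<Rightarrow> real) \<Rightarrow> (nat \<Rightarrow> real) \<Rightarrow> real" where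
  "S2_eqC m U v0 x s w =
     (norm x)\<^sup>2 + (s 1)\<^sup>2 + (\<Sum>i=2..m. ((s i)\<^sup>2 + (w i)\<^sup>2) / U i) + v0\<^sup>2 - (real m + 1)"

definition S2_eps_feasible ::
  "nat \<Rightarrow> (nat \<Rightarrow> real^'n^'n) \<Rightarrow> (nat \<Rightarrow> real^'n) \<Rightarrow> (nat \<Rightarrow> real) \<Rightarrow> (nat \<Rightarrow> real) \<Rightarrow> real \<Rightarrow> bool" where
  "S2_eps_feasible m A c d U eps \<longleftrightarrow>
     (\<exists>(v0::real) (x::real^'n) (s::nat \<Rightarrow> real) (w::nat \<Rightarrow> real).
        (\<forall>i\<in>{1..m}. \<bar>S2_eqA (A i) (c i) (d i) v0 x (s i)\<bar> \<le> eps) \<and>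
        (\<forall>i\<in>{2..m}. \<bar>S2_eqB (U i) v0 (s i) (w i)\<bar> \<le> eps) \<and>
        \<bar>S2_eqC m U v0 x s w\<bar> \<le> eps)"

text \<open>Largest absolute value of a coefficient of (S2), coefficients being those of the
  monomials of the expanded polynomial equations: A_i jj for x_j^2, A_i jk + A_i kj for
  x_j x_k (j \<noteq> k), (c_i)_j for v0 x_j, d_i for v0^2, 1 / -1 for s_i^2, v0^2, x_j^2,
  1/U_i for s_i^2, w_i^2, and the constant m+1 of the last equation.\<close>
definition S2_max_coeff ::
  "nat \<Rightarrow> (nat \<Rightarrow> real^'n^'n) \<Rightarrow> (nat \<Rightarrow> real^'n) \<Rightarrow> (nat \<Rightarrow> real) \<Rightarrow> (nat \<Rightarrow> real) \<Rightarrow> real" where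
  "S2_max_coeff m A c d U = Max (
        {\<bar>A i $ j $ j\<bar> | i j. i \<in> {1..m}}
      \<union> {\<bar>A i $ j $ k + A i $ k $ j\<bar> | i j k. i \<in> {1..m} \<and> j \<noteq> k}
      \<union> {\<bar>c i $ j\<bar> | i j. i \<in> {1..m}}
      \<union> {\<bar>d i\<bar> | i. i \<in> {1..m}}
      \<union> {\<bar>1 / U i\<bar> | i. i \<in> {2..m}}
      \<union> {1, real m + 1})"

end

theory Submission
  imports Defs
begin

text \<open>Homogenising (S1) with the variable \<open>v\<^sub>0\<close> and turning inequalities into equations with
  slacks \<open>s\<^sub>i\<close> gives (S2). For (a), take \<open>v\<^sub>0 = 1\<close> and \<open>s\<^sub>i = \<surd>max 0 (-f\<^sub>i x)\<close>; since
  \<open>\<parallel>x\<parallel>\<^sup>2 \<le> 1 + \<epsilon> \<le> 2\<close>, the bound \<open>U\<^sub>i\<close> leaves room for \<open>w\<^sub>i = \<surd>(U\<^sub>i - s\<^sub>i\<^sup>2)\<close>, which makes the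
  second and third families exact. For (b), the first equation for \<open>f\<^sub>1\<close>, the second family and
  the last equation add up to \<open>(m + 1)(v\<^sub>0\<^sup>2 - 1)\<close> within \<open>(m + 1)\<epsilon>\<close>, so \<open>v\<^sub>0\<^sup>2 \<ge> 1/2\<close>, and
  dehomogenising gives \<open>f\<^sub>i(x / v\<^sub>0) \<le> \<epsilon> / v\<^sub>0\<^sup>2 \<le> 2\<epsilon>\<close>; finally \<open>2 \<le> (2n + 1) M\<close> as \<open>M \<ge> 1\<close>.\<close>

lemma S1_eps_feasible_mono:
  "S1_eps_feasible m A c d eps \<Longrightarrow> eps \<le> eps' \<Longrightarrow> S1_eps_feasible m A c d eps'"
  unfolding S1_eps_feasible_def by (meson order_trans)

lemma S2_eps_feasible_mono:
  "S2_eps_feasible m A c d U eps \<Longrightarrow> eps \<le> eps' \<Longrightarrow> S2_eps_feasible m A c d U eps'"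
  unfolding S2_eps_feasible_def by (meson order_trans)

lemma quad_scaleR:
  "quad A c d (t *\<^sub>R x) = t\<^sup>2 * (x \<bullet> (A *v x)) + t * (c \<bullet> x) + d"
  unfolding quad_def by (simp add: matrix_vector_mult_scaleR power2_eq_square)

lemma S2_eqA_1: "S2_eqA A c d 1 x s = quad A c d x + s\<^sup>2"
  unfolding S2_eqA_def quad_def by simp

lemma S2_eqA_dehomogenize:
  assumes "v \<noteq> 0"
  shows "S2_eqA A c d v x s = v\<^sup>2 * quad A c d ((1 / v) *\<^sub>R x) + s\<^sup>2"
  unfolding S2_eqA_def quad_scaleR using assms by (simp add: power2_eq_square field_simps)

lemma quad_eq_norm_sq_minus_1_D:
  assumes "\<forall>x. quad A c d x = (norm x)\<^sup>2 - 1"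
  shows "d = -1" and "c \<bullet> x = 0" and "x \<bullet> (A *v x) = (norm x)\<^sup>2"
proof -
  show d: "d = -1"
    using assms[rule_format, of 0] unfolding quad_def by simp
  have "quad A c d x = quad A c d ((-1) *\<^sub>R x)"
    using assms by simp
  moreover have "quad A c d ((-1) *\<^sub>R x) = x \<bullet> (A *v x) - c \<bullet> x + d"
    by (simp only: quad_scaleR) simp
  ultimately show c: "c \<bullet> x = 0"
    unfolding quad_def by simp
  show "x \<bullet> (A *v x) = (norm x)\<^sup>2"
    using assms[rule_format, of x] d c unfolding quad_def by simp
qed

lemma S2_eqA_unit_sphere:
  assumes "\<forall>x. quad A c d x = (norm x)\<^sup>2 - 1"
  shows "S2_eqA A c d v x s = (norm x)\<^sup>2 - v\<^sup>2 + s\<^sup>2"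
  using quad_eq_norm_sq_minus_1_D[OF assms] unfolding S2_eqA_def by simp

lemma S2_max_coeff_ge_1:
  fixes A :: "nat \<Rightarrow> real^'n^'n"
  shows "S2_max_coeff m A c d U \<ge> 1"
proof -
  have "{\<bar>A i $ j $ j\<bar> | i j. i \<in> {1..m}} = (\<lambda>(i, j). \<bar>A i $ j $ j\<bar>) ` ({1..m} \<times> UNIV)"
    by auto
  moreover have "{\<bar>c i $ j\<bar> | i j. i \<in> {1..m}} = (\<lambda>(i, j). \<bar>c i $ j\<bar>) ` ({1..m} \<times> UNIV)"
    by auto
  moreover have "finite {\<bar>A i $ j $ k + A i $ k $ j\<bar> | i j k. i \<in> {1..m} \<and> j \<noteq> k}"
    by (rule finite_subset[where B = "(\<lambda>(i, j, k). \<bar>A i $ j $ k + A i $ k $ j\<bar>) ` ({1..m} \<times> UNIV)"])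
      (auto intro: rev_image_eqI[of "(_, _, _)"])
  ultimately show ?thesis
    unfolding S2_max_coeff_def by (intro Max_ge) auto
qed

lemma S2_eps_feasible_if_S1_eps_feasible:
  assumes "m \<ge> 1"
    and f1: "\<forall>x. quad (A 1) (c 1) (d 1) x = (norm x)\<^sup>2 - 1"
    and U_pos: "\<forall>i\<in>{2..m}. U i > 0"
    and U_bound: "\<forall>i\<in>{2..m}. \<forall>x. (norm x)\<^sup>2 \<le> 2 \<longrightarrow> \<bar>quad (A i) (c i) (d i) x\<bar> \<le> U i"
    and "0 \<le> eps" and "eps \<le> 1"
    and "S1_eps_feasible m A c d eps"
  shows "S2_eps_feasible m A c d U eps"
proof -
  obtain x where x: "\<forall>i\<in>{1..m}. quad (A i) (c i) (d i) x \<le> eps"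
    using assms(7) unfolding S1_eps_feasible_def by blast
  define f where "f i = quad (A i) (c i) (d i) x" for i
  define s where "s i = sqrt (max 0 (- f i))" for i
  define w where "w i = sqrt (U i - (s i)\<^sup>2)" for i
  have s_sq: "(s i)\<^sup>2 = max 0 (- f i)" for i
    unfolding s_def by simp
  have f_1: "f 1 = (norm x)\<^sup>2 - 1"
    using f1 unfolding f_def by simp
  have "f 1 \<le> eps"
    using x \<open>m \<ge> 1\<close> unfolding f_def by auto
  then have "(norm x)\<^sup>2 \<le> 2"
    using f_1 \<open>eps \<le> 1\<close> by linarith
  then have "\<bar>f i\<bar> \<le> U i" if "i \<in> {2..m}" for i
    using U_bound that unfolding f_def by blast
  then have "(s i)\<^sup>2 \<le> U i" if "i \<in> {2..m}" for i
    using that s_sq[of i] by fastforce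
  then have w_sq: "(w i)\<^sup>2 = U i - (s i)\<^sup>2" if "i \<in> {2..m}" for i
    using that unfolding w_def by simp
  have eqB: "S2_eqB (U i) 1 (s i) (w i) = 0" if "i \<in> {2..m}" for i
    using w_sq[OF that] U_pos that unfolding S2_eqB_def by force
  have "(\<Sum>i=2..m. ((s i)\<^sup>2 + (w i)\<^sup>2) / U i) = (\<Sum>i=2..m. 1)"
    by (intro sum.cong) (use w_sq U_pos in \<open>auto simp: less_le\<close>)
  also have "\<dots> = real m - 1"
    using \<open>m \<ge> 1\<close> by simp
  finally have eqC: "S2_eqC m U 1 x s w = max (f 1) 0"
    unfolding S2_eqC_def using s_sq[of 1] f_1 by auto
  have eqA: "S2_eqA (A i) (c i) (d i) 1 x (s i) = max (f i) 0" for i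
    unfolding S2_eqA_1 s_sq f_def by simp
  show ?thesis
    unfolding S2_eps_feasible_def
    using eqA eqB eqC x \<open>f 1 \<le> eps\<close> \<open>0 \<le> eps\<close> unfolding f_def
    by (intro exI[of _ 1] exI[of _ x] exI[of _ s] exI[of _ w]) auto
qed

lemma S2_eps_feasible_v0_sq:
  assumes "m \<ge> 1"
    and f1: "\<forall>x. quad (A 1) (c 1) (d 1) x = (norm x)\<^sup>2 - 1"
    and eqA_1: "\<bar>S2_eqA (A 1) (c 1) (d 1) v0 x (s 1)\<bar> \<le> eps"
    and eqB: "\<forall>i\<in>{2..m}. \<bar>S2_eqB (U i) v0 (s i) (w i)\<bar> \<le> eps"
    and eqC: "\<bar>S2_eqC m U v0 x s w\<bar> \<le> eps"
  shows "\<bar>v0\<^sup>2 - 1\<bar> \<le> eps"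
proof -
  define q where "q i = ((s i)\<^sup>2 + (w i)\<^sup>2) / U i" for i
  have sphere: "\<bar>(norm x)\<^sup>2 - v0\<^sup>2 + (s 1)\<^sup>2\<bar> \<le> eps"
    using eqA_1 unfolding S2_eqA_unit_sphere[OF f1] .
  have "\<bar>\<Sum>i=2..m. q i - v0\<^sup>2\<bar> \<le> (\<Sum>i=2..m. eps)"
    using eqB by (intro order_trans[OF sum_abs sum_mono]) (auto simp: S2_eqB_def q_def)
  then have slack: "\<bar>(\<Sum>i=2..m. q i) - (real m - 1) * v0\<^sup>2\<bar> \<le> (real m - 1) * eps"
    using \<open>m \<ge> 1\<close> by (simp add: sum_subtractf)
  have total: "\<bar>(norm x)\<^sup>2 + (s 1)\<^sup>2 + (\<Sum>i=2..m. q i) + v0\<^sup>2 - (real m + 1)\<bar> \<le> eps"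
    using eqC unfolding S2_eqC_def q_def .
  have "\<bar>(real m + 1) * (v0\<^sup>2 - 1)\<bar> \<le> (real m + 1) * eps"
    using sphere slack total by (simp add: algebra_simps abs_le_iff) linarith
  then show ?thesis
    by (simp add: abs_mult)
qed

lemma S1_eps_feasible_if_S2_eps_feasible:
  assumes "m \<ge> 1"
    and f1: "\<forall>x. quad (A 1) (c 1) (d 1) x = (norm x)\<^sup>2 - 1"
    and "0 \<le> eps" and "eps < 1/2"
    and "S2_eps_feasible m A c d U eps"
  shows "S1_eps_feasible m A c d (2 * eps)"
proof -
  obtain v0 x s w where
    eqA: "\<forall>i\<in>{1..m}. \<bar>S2_eqA (A i) (c i) (d i) v0 x (s i)\<bar> \<le> eps" and
    eqB: "\<forall>i\<in>{2..m}. \<bar>S2_eqB (U i) v0 (s i) (w i)\<bar> \<le> eps" and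
    eqC: "\<bar>S2_eqC m U v0 x s w\<bar> \<le> eps"
    using assms(5) unfolding S2_eps_feasible_def by blast
  have "\<bar>S2_eqA (A 1) (c 1) (d 1) v0 x (s 1)\<bar> \<le> eps"
    using eqA \<open>m \<ge> 1\<close> by simp
  then have "\<bar>v0\<^sup>2 - 1\<bar> \<le> eps"
    by (rule S2_eps_feasible_v0_sq[of m A c d, OF \<open>m \<ge> 1\<close> f1 _ eqB eqC])
  then have v0_sq: "v0\<^sup>2 \<ge> 1/2"
    using \<open>eps < 1/2\<close> by linarith
  then have "v0 \<noteq> 0"
    by auto
  have "quad (A i) (c i) (d i) ((1 / v0) *\<^sub>R x) \<le> 2 * eps" if "i \<in> {1..m}" for i
  proof -
    have "v0\<^sup>2 * quad (A i) (c i) (d i) ((1 / v0) *\<^sub>R x) \<le> eps"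
      using eqA that S2_eqA_dehomogenize[OF \<open>v0 \<noteq> 0\<close>, of "A i" "c i" "d i" x "s i"]
      by (smt (verit) zero_le_power2)
    also have "\<dots> \<le> v0\<^sup>2 * (2 * eps)"
      using mult_right_mono[OF v0_sq, of "2 * eps"] \<open>0 \<le> eps\<close> by simp
    finally show ?thesis
      by (rule mult_left_le_imp_le) (use \<open>v0 \<noteq> 0\<close> in simp)
  qed
  then show ?thesis
    unfolding S1_eps_feasible_def by blast
qed

theorem lemma2:
  fixes m :: nat
    and A :: "nat \<Rightarrow> real^'n^'n"
    and c :: "nat \<Rightarrow> real^'n"
    and d :: "nat \<Rightarrow> real"
    and U :: "nat \<Rightarrow> real"
    and eps :: real
  assumes "m \<ge> 2"
    and "CARD('n) \<ge> 2"
    and "\<forall>i\<in>{1..m}. transpose (A i) = A i"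
    and "\<forall>x. quad (A 1) (c 1) (d 1) x = (norm x)\<^sup>2 - 1"
    and "\<forall>i\<in>{2..m}. U i > 0"
    and "\<forall>i\<in>{2..m}. \<forall>x. (norm x)\<^sup>2 \<le> 2 \<longrightarrow> \<bar>quad (A i) (c i) (d i) x\<bar> \<le> U i"
    and "0 \<le> eps" and "eps < 1/2"
  shows "(S1_eps_feasible m A c d eps \<longrightarrow> S2_eps_feasible m A c d U (real m * eps))
       \<and> (S2_eps_feasible m A c d U eps \<longrightarrow>
            S1_eps_feasible m A c d ((2 * real CARD('n) + 1) * S2_max_coeff m A c d U * eps))"
proof (intro conjI impI)
  assume "S1_eps_feasible m A c d eps"
  then have "S2_eps_feasible m A c d U eps"
    using assms by (intro S2_eps_feasible_if_S1_eps_feasible) auto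
  moreover have "eps \<le> real m * eps"
    using assms(1,7) by (simp add: mult_le_cancel_right1)
  ultimately show "S2_eps_feasible m A c d U (real m * eps)"
    by (rule S2_eps_feasible_mono)
next
  assume "S2_eps_feasible m A c d U eps"
  then have "S1_eps_feasible m A c d (2 * eps)"
    using assms by (intro S1_eps_feasible_if_S2_eps_feasible) auto
  moreover have "2 * eps \<le> (2 * real CARD('n) + 1) * S2_max_coeff m A c d U * eps"
  proof (rule mult_right_mono)
    have "2 \<le> (2 * real CARD('n) + 1) * 1"
      using assms(2) by simp
    also have "\<dots> \<le> (2 * real CARD('n) + 1) * S2_max_coeff m A c d U"
      by (intro mult_left_mono S2_max_coeff_ge_1) simp
    finally show "2 \<le> (2 * real CARD('n) + 1) * S2_max_coeff m A c d U" .
  qed (rule \<open>0 \<le> eps\<close>)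
  ultimately show "S1_eps_feasible m A c d ((2 * real CARD('n) + 1) * S2_max_coeff m A c d U * eps)"
    by (rule S1_eps_feasible_mono)
qed

end
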